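(* Let $n\ge2$, let $A=[a_{kl}]$ be a real $n\times n$ matrix with zero diagonal and $f(\sigma)=\sum_{p=1}^{n-1}\sum_{q=p+1}^n a_{\sigma(p)\sigma(q)}$ its LOP objective function on $\Sigma_n$. For $i\in\{1,\dots,n-1\}$ and $j\in\{1,\dots,n\}$ let $\mu_{ij}=\frac{1}{(n-1)!}\sum_{\sigma:\sigma(i)=j}f(\sigma)$ and $\mu_{i+1\,j}=\frac{1}{(n-1)!}\sum_{\sigma:\sigma(i+1)=j}f(\sigma)$. Then $$\mu_{i+1\,j}-\mu_{ij}=\frac{1}{n-1}\sum_{k\ne j}\bigl(a_{kj}-a_{jk}\bigr).$$
   Context: $\Sigma_n$ is the symmetric group on $\{1,\dots,n\}$; $\sigma(p)$ is the row/column index placed in position $p$. *)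

theory Defs
  imports "HOL-Combinatorics.Permutations" Complex_Main
begin

text \<open>Matrices are n x n real matrices indexed by 1..n, represented as functions
  nat \<Rightarrow> nat \<Rightarrow> real (entries outside 1..n are irrelevant).\<close>

definition lop_obj :: "nat \<Rightarrow> (nat \<Rightarrow> nat \<Rightarrow> real) \<Rightarrow> (nat \<Rightarrow> nat) \<Rightarrow> real" where
  "lop_obj n A \<sigma> = (\<Sum>p = 1..n-1. \<Sum>q = p+1..n. A (\<sigma> p) (\<sigma> q))"

definition mu :: "nat \<Rightarrow> (nat \<Rightarrow> nat \<Rightarrow> real) \<Rightarrow> nat \<Rightarrow> nat \<Rightarrow> real" where
  "mu n A i j = (1 / fact (n - 1)) *
     (\<Sum>\<sigma> \<in> {\<sigma>. \<sigma> permutes {1..n} \<and> \<sigma> i = j}. lop_obj n A \<sigma>)"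

end

theory Submission
  imports Defs
begin

(* Right-composing sigma with the transposition t of the adjacent positions i and i + 1 reverses
   only the pair (i, i + 1), so f(sigma o t) - f(sigma) = a(sigma(i+1), sigma(i)) - a(sigma(i), sigma(i+1)).
   As sigma |-> sigma o t maps the permutations with sigma(i) = j onto those with sigma(i+1) = j,
   (n - 1)! (mu(i+1, j) - mu(i, j)) is the sum of a(k, j) - a(j, k), k = sigma(i+1), over all sigma
   with sigma(i) = j; every k \<noteq> j occurs for exactly (n - 2)! of them. *)

definition increasing_pairs :: "nat \<Rightarrow> (nat \<times> nat) set" where
  "increasing_pairs n = {(p, q). 1 \<le> p \<and> p < q \<and> q \<le> n}"

lemma finite_increasing_pairs: "finite (increasing_pairs n)"
  by (rule finite_subset[of _ "{0..n} \<times> {0..n}"]) (auto simp: increasing_pairs_def)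

lemma lop_obj_eq_sum_increasing_pairs:
  "lop_obj n A \<sigma> = (\<Sum>(p, q)\<in>increasing_pairs n. A (\<sigma> p) (\<sigma> q))"
proof -
  have "lop_obj n A \<sigma> = (\<Sum>(p, q)\<in>Sigma {1..n-1} (\<lambda>p. {p+1..n}). A (\<sigma> p) (\<sigma> q))"
    unfolding lop_obj_def by (rule sum.Sigma) auto
  also have "Sigma {1..n-1} (\<lambda>p. {p+1..n}) = increasing_pairs n"
    by (auto simp: increasing_pairs_def)
  finally show ?thesis .
qed

lemma lop_obj_comp_adjacent_transpose:
  assumes "1 \<le> i" "i + 1 \<le> n"
  shows "lop_obj n A (\<sigma> \<circ> Transposition.transpose i (i + 1))
    = lop_obj n A \<sigma> + A (\<sigma> (i + 1)) (\<sigma> i) - A (\<sigma> i) (\<sigma> (i + 1))"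
proof -
  let ?t = "Transposition.transpose i (i + 1)"
  let ?P = "increasing_pairs n - {(i, i + 1)}"
  let ?G = "\<lambda>(p, q). A (\<sigma> p) (\<sigma> q)"
  have split: "(\<Sum>x\<in>increasing_pairs n. H x) = H (i, i + 1) + (\<Sum>x\<in>?P. H x)" for H
    using assms by (intro sum.remove finite_increasing_pairs) (auto simp: increasing_pairs_def)
  have involutory: "map_prod ?t ?t (map_prod ?t ?t x) = x" for x
    by (cases x) simp
  have order_preserved: "map_prod ?t ?t x \<in> ?P" if "x \<in> ?P" for x
    using that assms by (auto simp: increasing_pairs_def transpose_def split: if_splits)
  have "(\<Sum>x\<in>?P. ?G (map_prod ?t ?t x)) = (\<Sum>x\<in>?P. ?G x)"
    by (rule sum.reindex_bij_witness[where i="map_prod ?t ?t" and j="map_prod ?t ?t"])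
      (use involutory order_preserved in auto)
  then show ?thesis
    using split[of "\<lambda>(p, q). A ((\<sigma> \<circ> ?t) p) ((\<sigma> \<circ> ?t) q)"] split[of ?G]
    by (simp add: lop_obj_eq_sum_increasing_pairs case_prod_unfold)
qed

lemma sum_permutes_with_value_comp_transpose:
  assumes "a \<in> S" "b \<in> S"
  shows "(\<Sum>\<sigma>\<in>{\<sigma>. \<sigma> permutes S \<and> \<sigma> b = j}. g \<sigma>)
       = (\<Sum>\<sigma>\<in>{\<sigma>. \<sigma> permutes S \<and> \<sigma> a = j}. g (\<sigma> \<circ> Transposition.transpose a b))"
proof -
  let ?t = "Transposition.transpose a b"
  have "\<sigma> \<circ> ?t permutes S" if "\<sigma> permutes S" for \<sigma>
    using that assms by (simp add: permutes_compose permutes_swap_id)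
  then show ?thesis
    by (intro sum.reindex_bij_witness[where i="\<lambda>\<sigma>. \<sigma> \<circ> ?t" and j="\<lambda>\<sigma>. \<sigma> \<circ> ?t"])
      (auto simp: comp_assoc)
qed

lemma card_permutes_with_value:
  assumes "a \<in> S" "b \<in> S"
  shows "card {p. p permutes S \<and> p a = b \<and> P p}
       = card {q. q permutes S - {a} \<and> P (Transposition.transpose a b \<circ> q)}"
proof -
  let ?t = "Transposition.transpose a b"
  let ?P = "{p. p permutes S \<and> p a = b \<and> P p}"
  let ?Q = "{q. q permutes S - {a} \<and> P (?t \<circ> q)}"
  have involutory: "?t \<circ> (?t \<circ> p) = p" for p :: "'a \<Rightarrow> 'a"
    by (simp add: fun_eq_iff)
  have Q_to_P: "?t \<circ> q \<in> ?P" if "q \<in> ?Q" for q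
  proof -
    have q: "q permutes S - {a}" "P (?t \<circ> q)"
      using that by simp_all
    have "q a = a"
      using q(1) by (simp add: permutes_not_in)
    moreover have "?t \<circ> q permutes S"
      using assms permutes_subset[OF q(1)] by (simp add: permutes_compose permutes_swap_id)
    ultimately show ?thesis
      using q(2) by simp
  qed
  have P_to_Q: "?t \<circ> p \<in> ?Q" if "p \<in> ?P" for p
  proof -
    have p: "p permutes S" "p a = b" "P p"
      using that by simp_all
    have "?t \<circ> p permutes S"
      using p(1) assms by (simp add: permutes_compose permutes_swap_id)
    then have "?t \<circ> p permutes S - {a}"
      by (rule permutes_superset) (auto simp: p(2))
    then show ?thesis
      using p(3) involutory by simp
  qed
  have "bij_betw (\<lambda>q. ?t \<circ> q) ?Q ?P"
    by (rule bij_betw_byWitness[where f'="\<lambda>p. ?t \<circ> p"])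
      (use involutory Q_to_P P_to_Q in blast)+
  then show ?thesis
    by (rule bij_betw_same_card[symmetric])
qed

lemma card_permutes_with_two_values:
  assumes "finite S" "a \<in> S" "b \<in> S" "c \<in> S" "d \<in> S" "a \<noteq> c" "b \<noteq> d"
  shows "card {p. p permutes S \<and> p a = b \<and> p c = d} = fact (card S - 2)"
proof -
  let ?t = "Transposition.transpose a b"
  have comp_transpose_eq: "(?t \<circ> q) c = d \<longleftrightarrow> q c = ?t d" for q
    by (metis comp_apply transpose_involutory)
  have "card {p. p permutes S \<and> p a = b \<and> p c = d} = card {q. q permutes S - {a} \<and> q c = ?t d}"
    using card_permutes_with_value[OF assms(2,3), of "\<lambda>p. p c = d"] by (simp only: comp_transpose_eq)
  also have "\<dots> = card {r. r permutes S - {a} - {c}}"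
  proof -
    have "?t d \<in> S - {a}"
      using assms by (auto simp: transpose_def)
    then show ?thesis
      using card_permutes_with_value[of c "S - {a}" "?t d" "\<lambda>_. True"] assms by simp
  qed
  also have "\<dots> = fact (card S - 2)"
    using assms by (simp add: card_permutations card_Diff_singleton numeral_2_eq_2)
  finally show ?thesis .
qed

lemma sum_permutes_with_value_apply:
  fixes F :: "'a \<Rightarrow> 'b::{comm_semiring_1, semiring_char_0}"
  assumes "finite S" "a \<in> S" "b \<in> S" "c \<in> S" "a \<noteq> c"
  shows "(\<Sum>\<sigma>\<in>{\<sigma>. \<sigma> permutes S \<and> \<sigma> a = b}. F (\<sigma> c)) = fact (card S - 2) * (\<Sum>d\<in>S - {b}. F d)"
proof -
  let ?Sb = "{\<sigma>. \<sigma> permutes S \<and> \<sigma> a = b}"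
  have "(\<lambda>\<sigma>. \<sigma> c) ` ?Sb \<subseteq> S - {b}"
    using assms by (auto simp: permutes_in_image dest: permutes_inj) (metis injD permutes_inj)
  moreover have "finite ?Sb"
    using assms(1) by (auto intro: finite_subset[OF _ finite_permutations])
  ultimately have "(\<Sum>\<sigma>\<in>?Sb. F (\<sigma> c)) = (\<Sum>d\<in>S - {b}. \<Sum>\<sigma>\<in>{\<sigma>\<in>?Sb. \<sigma> c = d}. F (\<sigma> c))"
    using assms(1) by (intro sum.group[symmetric]) auto
  also have "\<dots> = (\<Sum>d\<in>S - {b}. of_nat (card {\<sigma>. \<sigma> permutes S \<and> \<sigma> a = b \<and> \<sigma> c = d}) * F d)"
    by (intro sum.cong) auto
  also have "\<dots> = (\<Sum>d\<in>S - {b}. fact (card S - 2) * F d)"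
    using assms by (intro sum.cong refl) (subst card_permutes_with_two_values, auto)
  finally show ?thesis
    by (simp add: sum_distrib_left)
qed

theorem proposition9:
  fixes n :: nat and A :: "nat \<Rightarrow> nat \<Rightarrow> real" and i j :: nat
  assumes "n \<ge> 2"
    and "\<And>k. k \<in> {1..n} \<Longrightarrow> A k k = 0"
    and "i \<in> {1..n-1}" and "j \<in> {1..n}"
  shows "mu n A (i+1) j - mu n A i j
           = (1 / (real n - 1)) * (\<Sum>k \<in> {1..n} - {j}. A k j - A j k)"
proof -
  let ?t = "Transposition.transpose i (i + 1)"
  define Si where "Si = {\<sigma>. \<sigma> permutes {1..n} \<and> \<sigma> i = j}"
  have i: "1 \<le> i" "i + 1 \<le> n"
    using assms(3) by auto
  have "mu n A (i + 1) j - mu n A i j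
      = (\<Sum>\<sigma>\<in>Si. lop_obj n A (\<sigma> \<circ> ?t) - lop_obj n A \<sigma>) / fact (n - 1)"
    using sum_permutes_with_value_comp_transpose[where a=i and b="i + 1" and S="{1..n}" and g="lop_obj n A"] i
    by (simp add: mu_def Si_def sum_subtractf diff_divide_distrib)
  also have "(\<Sum>\<sigma>\<in>Si. lop_obj n A (\<sigma> \<circ> ?t) - lop_obj n A \<sigma>)
      = (\<Sum>\<sigma>\<in>Si. A (\<sigma> (i + 1)) j - A j (\<sigma> (i + 1)))"
  proof (rule sum.cong[OF refl])
    fix \<sigma> assume "\<sigma> \<in> Si"
    then show "lop_obj n A (\<sigma> \<circ> ?t) - lop_obj n A \<sigma> = A (\<sigma> (i + 1)) j - A j (\<sigma> (i + 1))"
      using lop_obj_comp_adjacent_transpose[OF i, of A \<sigma>] by (simp add: Si_def)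
  qed
  also have "\<dots> = fact (n - 2) * (\<Sum>k\<in>{1..n} - {j}. A k j - A j k)"
    unfolding Si_def using i assms(4)
    by (subst sum_permutes_with_value_apply) auto
  also have "fact (n - 1) = (real n - 1) * fact (n - 2)"
  proof -
    obtain m where "n = m + 2"
      using le_add_diff_inverse2[OF assms(1)] by metis
    then show ?thesis
      by (simp add: add.commute)
  qed
  finally show ?thesis
    by simp
qed

end
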